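(* Let $(G,O)$ be an equipped group such that the elements of $O$ generate $G$ and $O$ consists of a single conjugacy class, and let $\widehat G$ be the associated $C$-group. Then $\widehat G$ is isomorphic to a semidirect product $[\widehat G,\widehat G]\rtimes\mathbb Z$.
   Context: An equipped group is a pair $(G,O)$, $G$ a group, $O\subset G$ a union of finitely many conjugacy classes, $1\notin O$. The associated $C$-group $\widehat G$ (the $C$-group equivalent to $(G,O)$) is the group with generators $y_g$ ($g\in O$) and relations $y_h^{-1}y_gy_h=y_{h^{-1}gh}$ for all $g,h\in O$. *)

theory Defs
  imports "HOL-Algebra.Algebra"
begin

definition conj_class :: "('a, 'b) monoid_scheme \<Rightarrow> 'a \<Rightarrow> 'a set" where
  "conj_class G g = {inv\<^bsub>G\<^esub> h \<otimes>\<^bsub>G\<^esub> g \<otimes>\<^bsub>G\<^esub> h | h. h \<in> carrier G}"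

definition equipped_group :: "('a, 'b) monoid_scheme \<Rightarrow> 'a set \<Rightarrow> bool" where
  "equipped_group G Ocl \<longleftrightarrow> group G \<and> \<one>\<^bsub>G\<^esub> \<notin> Ocl \<and>
     (\<exists>C. finite C \<and> C \<subseteq> carrier G \<and> Ocl = (\<Union>g\<in>C. conj_class G g))"

text \<open>Words in the generators: a letter (x, False) stands for x, (x, True) for x inverse.\<close>
type_synonym 'a word = "('a \<times> bool) list"

definition words :: "'a set \<Rightarrow> 'a word set" where
  "words S = lists (S \<times> UNIV)"

inductive pres_eq :: "'a set \<Rightarrow> ('a word \<times> 'a word) set \<Rightarrow> 'a word \<Rightarrow> 'a word \<Rightarrow> bool"
  for S :: "'a set" and Rel :: "('a word \<times> 'a word) set" where
  refl: "w \<in> words S \<Longrightarrow> pres_eq S Rel w w"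
| sym: "pres_eq S Rel u v \<Longrightarrow> pres_eq S Rel v u"
| trans: "pres_eq S Rel u v \<Longrightarrow> pres_eq S Rel v w \<Longrightarrow> pres_eq S Rel u w"
| cancel: "u \<in> words S \<Longrightarrow> v \<in> words S \<Longrightarrow> x \<in> S \<Longrightarrow>
     pres_eq S Rel (u @ [(x, b), (x, \<not> b)] @ v) (u @ v)"
| rel: "(l, r) \<in> Rel \<Longrightarrow> l \<in> words S \<Longrightarrow> r \<in> words S \<Longrightarrow> u \<in> words S \<Longrightarrow> v \<in> words S \<Longrightarrow>
     pres_eq S Rel (u @ l @ v) (u @ r @ v)"

definition pres_class :: "'a set \<Rightarrow> ('a word \<times> 'a word) set \<Rightarrow> 'a word \<Rightarrow> 'a word set" where
  "pres_class S Rel w = {v. pres_eq S Rel w v}"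

definition presented_group :: "'a set \<Rightarrow> ('a word \<times> 'a word) set \<Rightarrow> 'a word set monoid" where
  "presented_group S Rel =
    \<lparr> carrier = pres_class S Rel ` words S,
      monoid.mult = (\<lambda>A B. {w. \<exists>a\<in>A. \<exists>b\<in>B. pres_eq S Rel (a @ b) w}),
      one = pres_class S Rel [] \<rparr>"

text \<open>The C-group associated with (G,Ocl): generators y_g (g in Ocl), relations
  y_h^-1 y_g y_h = y_(h^-1 g h) for all g, h in Ocl.\<close>
definition C_group_rels :: "('a, 'b) monoid_scheme \<Rightarrow> 'a set \<Rightarrow> ('a word \<times> 'a word) set" where
  "C_group_rels G Ocl =
    {([(h, True), (g, False), (h, False)], [(inv\<^bsub>G\<^esub> h \<otimes>\<^bsub>G\<^esub> g \<otimes>\<^bsub>G\<^esub> h, False)]) | g h. g \<in> Ocl \<and> h \<in> Ocl}"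

definition C_group :: "('a, 'b) monoid_scheme \<Rightarrow> 'a set \<Rightarrow> 'a word set monoid" where
  "C_group G Ocl = presented_group Ocl (C_group_rels G Ocl)"

definition semidirect_product ::
  "('a, 'c) monoid_scheme \<Rightarrow> ('b, 'd) monoid_scheme \<Rightarrow> ('b \<Rightarrow> 'a \<Rightarrow> 'a) \<Rightarrow> ('a \<times> 'b) monoid" where
  "semidirect_product N H \<phi> =
    \<lparr> carrier = carrier N \<times> carrier H,
      monoid.mult = (\<lambda>(n, a) (m, b). (n \<otimes>\<^bsub>N\<^esub> \<phi> a m, a \<otimes>\<^bsub>H\<^esub> b)),
      one = (\<one>\<^bsub>N\<^esub>, \<one>\<^bsub>H\<^esub>) \<rparr>"

end

theory Submission imports Defs begin

text \<open>The exponent sum of words respects the defining relations, so it induces a homomorphism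
  E from the C-group onto the integers, split by n \<mapsto> t^n for t = y_g with g \<in> O.
  Since O is a single conjugacy class of G and generates G, conjugation in G by products of
  elements of O is mirrored by the relations, so every generator y_z is conjugate to t in the
  C-group and y_z t^-1 is a commutator. By induction over the generators, x t^(-E x) lies in
  the commutator subgroup for every x; hence ker E is the commutator subgroup, and a
  homomorphism onto \<int> with a section presents the group as ker E \<rtimes> \<int>, with \<int> acting by
  conjugation with powers of t.\<close>

section \<open>Splitting off the integers\<close>

lemma (in group) inv_mult_cancel_left [simp]:
  "x \<in> carrier G \<Longrightarrow> y \<in> carrier G \<Longrightarrow> inv x \<otimes> (x \<otimes> y) = y"
  by (simp add: m_assoc[symmetric])

lemma (in group) mult_inv_cancel_left [simp]:
  "x \<in> carrier G \<Longrightarrow> y \<in> carrier G \<Longrightarrow> x \<otimes> (inv x \<otimes> y) = y"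
  by (simp add: m_assoc[symmetric])

lemma (in group) derived_subset_kernel:
  assumes "comm_group H" and "f \<in> hom G H"
  shows "derived G (carrier G) \<subseteq> kernel G H f"
proof -
  interpret H: comm_group H by (rule assms(1))
  interpret f: group_hom G H f by (simp add: group_hom_def group_hom_axioms_def assms is_group)
  have "a \<otimes>\<^bsub>H\<^esub> b \<otimes>\<^bsub>H\<^esub> inv\<^bsub>H\<^esub> a \<otimes>\<^bsub>H\<^esub> inv\<^bsub>H\<^esub> b = \<one>\<^bsub>H\<^esub>"
    if "a \<in> carrier H" "b \<in> carrier H" for a b
  proof -
    have "a \<otimes>\<^bsub>H\<^esub> b \<otimes>\<^bsub>H\<^esub> inv\<^bsub>H\<^esub> a \<otimes>\<^bsub>H\<^esub> inv\<^bsub>H\<^esub> b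
        = b \<otimes>\<^bsub>H\<^esub> (a \<otimes>\<^bsub>H\<^esub> inv\<^bsub>H\<^esub> a) \<otimes>\<^bsub>H\<^esub> inv\<^bsub>H\<^esub> b"
      using that by (simp add: H.m_comm[of a b] H.m_assoc)
    then show ?thesis using that by simp
  qed
  then have "derived_set G (carrier G) \<subseteq> kernel G H f"
    by (auto simp: kernel_def)
  then show ?thesis
    unfolding derived_def by (rule generate_subgroup_incl[OF _ f.subgroup_kernel])
qed

definition conj_action :: "('a, 'b) monoid_scheme \<Rightarrow> 'a set \<Rightarrow> 'a \<Rightarrow> int \<Rightarrow> 'a \<Rightarrow> 'a" where
  "conj_action G N t a = (\<lambda>m\<in>N. t [^]\<^bsub>G\<^esub> a \<otimes>\<^bsub>G\<^esub> m \<otimes>\<^bsub>G\<^esub> inv\<^bsub>G\<^esub> (t [^]\<^bsub>G\<^esub> a))"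

lemma (in group) conj_action_hom_AutoGroup:
  assumes N: "N \<lhd> G" and t: "t \<in> carrier G"
  shows "conj_action G N t \<in> hom integer_group (AutoGroup (G\<lparr>carrier := N\<rparr>))"
proof -
  interpret N: normal N G by (rule N)
  let ?\<phi> = "conj_action G N t"
  have closed: "?\<phi> a m \<in> N" if "m \<in> N" for a m
    using that N.inv_op_closed2[of "t [^] a" m] t by (simp add: conj_action_def)
  have compose: "?\<phi> (a + b) = compose N (?\<phi> a) (?\<phi> b)" for a b
  proof
    fix m show "?\<phi> (a + b) m = compose N (?\<phi> a) (?\<phi> b) m"
      using closed[of m b] N.subset t
      by (cases "m \<in> N") (auto simp: compose_def conj_action_def int_pow_mult m_assoc inv_mult_group)
  qed
  have bij: "bij_betw (?\<phi> a) N N" for a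
  proof (rule bij_betw_byWitness[where f' = "?\<phi> (- a)"])
    show "\<forall>m\<in>N. ?\<phi> (- a) (?\<phi> a m) = m" "\<forall>m\<in>N. ?\<phi> a (?\<phi> (- a) m) = m"
      using closed N.subset N.inv_op_closed1 t by (auto simp: conj_action_def int_pow_neg m_assoc)
  qed (auto simp: closed)
  have in_auto: "?\<phi> a \<in> auto (G\<lparr>carrier := N\<rparr>)" for a
    using bij closed N.subset t
    by (auto simp: auto_def Bij_def hom_def conj_action_def m_assoc)
  show ?thesis
  proof (rule homI)
    show "?\<phi> a \<in> carrier (AutoGroup (G\<lparr>carrier := N\<rparr>))" for a
      using in_auto by (simp add: AutoGroup_def)
    show "?\<phi> (a \<otimes>\<^bsub>integer_group\<^esub> b) = ?\<phi> a \<otimes>\<^bsub>AutoGroup (G\<lparr>carrier := N\<rparr>)\<^esub> ?\<phi> b" for a b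
      using in_auto[of a] in_auto[of b] compose[of a b] by (auto simp: AutoGroup_def BijGroup_def auto_def)
  qed
qed

lemma (in group) iso_semidirect_kernel_integer:
  assumes E: "E \<in> hom G integer_group" and t: "t \<in> carrier G" and Et: "E t = 1"
  defines "K \<equiv> kernel G integer_group E"
  shows "G \<cong> semidirect_product (G\<lparr>carrier := K\<rparr>) integer_group (conj_action G K t)"
proof -
  interpret E: group_hom G integer_group E
    using E by (simp add: group_hom_def group_hom_axioms_def is_group)
  have K: "K = {x \<in> carrier G. E x = 0}" by (simp add: K_def kernel_def)
  have E_pow: "E (t [^] a) = a" for a
    using t Et E.hom_int_pow[of t a] by simp
  let ?S = "semidirect_product (G\<lparr>carrier := K\<rparr>) integer_group (conj_action G K t)"
  define f where "f x = (x \<otimes> t [^] (- E x), E x)" for x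
  have fK: "x \<otimes> t [^] (- E x) \<in> K" if "x \<in> carrier G" for x
    using that t by (simp add: K E_pow)
  have "f \<in> hom G ?S"
  proof (rule homI)
    show "f x \<in> carrier ?S" if "x \<in> carrier G" for x
      using fK[OF that] by (simp add: f_def semidirect_product_def)
    show "f (x \<otimes> y) = f x \<otimes>\<^bsub>?S\<^esub> f y" if x: "x \<in> carrier G" and y: "y \<in> carrier G" for x y
    proof -
      have "t [^] (- E x - E y) = t [^] (- E y) \<otimes> t [^] (- E x)"
        using t int_pow_mult[of t "- E y" "- E x"] by (simp add: algebra_simps)
      then show ?thesis
        using x y t fK[OF y] by (simp add: f_def semidirect_product_def conj_action_def m_assoc int_pow_neg)
    qed
  qed
  moreover have "bij_betw f (carrier G) (carrier ?S)"
  proof (rule bij_betw_byWitness[where f' = "\<lambda>(n, a). n \<otimes> t [^] a"])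
    show "\<forall>x\<in>carrier G. (\<lambda>(n, a). n \<otimes> t [^] a) (f x) = x"
      using t by (simp add: f_def m_assoc int_pow_neg)
    show "\<forall>y\<in>carrier ?S. f ((\<lambda>(n, a). n \<otimes> t [^] a) y) = y"
      using t by (auto simp: semidirect_product_def K f_def E_pow m_assoc int_pow_neg)
    show "f ` carrier G \<subseteq> carrier ?S"
      using fK by (auto simp: f_def semidirect_product_def)
    show "(\<lambda>(n, a). n \<otimes> t [^] a) ` carrier ?S \<subseteq> carrier G"
      using t by (auto simp: semidirect_product_def K)
  qed
  ultimately show ?thesis by (auto simp: is_iso_def iso_def)
qed

lemma (in group) kernel_integer_subset_normal:
  assumes N: "N \<lhd> G" and E: "E \<in> hom G integer_group" and t: "t \<in> carrier G"
    and Y: "generate G Y = carrier G"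
    and EY: "\<And>y. y \<in> Y \<Longrightarrow> E y = 1" and Yt: "\<And>y. y \<in> Y \<Longrightarrow> y \<otimes> inv t \<in> N"
  shows "kernel G integer_group E \<subseteq> N"
proof -
  interpret N: normal N G by (rule N)
  interpret E: group_hom G integer_group E
    using E by (simp add: group_hom_def group_hom_axioms_def is_group)
  have gen_carrier: "x \<in> carrier G" if "x \<in> generate G Y" for x
    using that Y by simp
  have "x \<otimes> t [^] (- E x) \<in> N" if "x \<in> generate G Y" for x
    using that
  proof (induction rule: generate.induct)
    case one
    then show ?case by simp
  next
    case (incl y)
    then show ?case using Yt[of y] EY[of y] t by (simp add: int_pow_neg)
  next
    case (inv y)
    have y: "y \<in> carrier G" using gen_carrier generate.incl[OF inv] by blast
    have "inv y \<otimes> t = inv y \<otimes> inv (y \<otimes> inv t) \<otimes> y"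
      using y t by (simp add: inv_mult_group m_assoc)
    then show ?case
      using N.inv_op_closed1[OF y N.m_inv_closed[OF Yt[OF inv]]] EY[OF inv] y t by simp
  next
    case (eng x1 x2)
    have x1: "x1 \<in> carrier G" and x2: "x2 \<in> carrier G"
      using eng.hyps gen_carrier by auto
    have "t [^] (- E x1 - E x2) = t [^] (- E x2) \<otimes> inv (t [^] E x1)"
      using t int_pow_mult[of t "- E x2" "- E x1"] by (simp add: algebra_simps int_pow_neg)
    then have "x1 \<otimes> x2 \<otimes> t [^] (- E (x1 \<otimes> x2))
        = (x1 \<otimes> t [^] (- E x1)) \<otimes> (t [^] E x1 \<otimes> (x2 \<otimes> t [^] (- E x2)) \<otimes> inv (t [^] E x1))"
      using x1 x2 t by (simp add: m_assoc int_pow_neg)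
    then show ?case
      using eng.IH N.inv_op_closed2[of "t [^] E x1"] x1 x2 t by simp
  qed
  then show ?thesis
    using Y by (force simp: kernel_def)
qed

section \<open>Presented groups\<close>

lemma words_append [simp]: "u @ v \<in> words S \<longleftrightarrow> u \<in> words S \<and> v \<in> words S"
  by (auto simp: words_def)

lemma words_Cons [simp]: "x # v \<in> words S \<longleftrightarrow> fst x \<in> S \<and> v \<in> words S"
  by (cases x) (auto simp: words_def)

lemma words_Nil [simp]: "[] \<in> words S"
  by (simp add: words_def)

lemma pres_eq_words: "pres_eq S R u v \<Longrightarrow> u \<in> words S \<and> v \<in> words S"
  by (induction rule: pres_eq.induct) auto

lemma pres_eq_append_right: "pres_eq S R u v \<Longrightarrow> w \<in> words S \<Longrightarrow> pres_eq S R (u @ w) (v @ w)"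
proof (induction rule: pres_eq.induct)
  case (cancel u v x b)
  then show ?case using pres_eq.cancel[of u S "v @ w" x R b] by simp
next
  case (rel l r u v)
  then show ?case using pres_eq.rel[of l r R S u "v @ w"] by simp
qed (auto intro: pres_eq.refl pres_eq.sym pres_eq.trans)

lemma pres_eq_append_left: "pres_eq S R u v \<Longrightarrow> w \<in> words S \<Longrightarrow> pres_eq S R (w @ u) (w @ v)"
proof (induction rule: pres_eq.induct)
  case (cancel u v x b)
  then show ?case using pres_eq.cancel[of "w @ u" S v x R b] by simp
next
  case (rel l r u v)
  then show ?case using pres_eq.rel[of l r R S "w @ u" v] by simp
qed (auto intro: pres_eq.refl pres_eq.sym pres_eq.trans)

lemma pres_eq_append: "pres_eq S R u u' \<Longrightarrow> pres_eq S R v v' \<Longrightarrow> pres_eq S R (u @ v) (u' @ v')"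
  by (meson pres_eq.trans pres_eq_append_left pres_eq_append_right pres_eq_words)

lemma pres_class_eq_iff:
  assumes "u \<in> words S"
  shows "pres_class S R u = pres_class S R v \<longleftrightarrow> pres_eq S R u v"
proof
  assume "pres_class S R u = pres_class S R v"
  moreover have "u \<in> pres_class S R u"
    using assms by (simp add: pres_class_def pres_eq.refl)
  ultimately show "pres_eq S R u v"
    by (auto simp: pres_class_def intro: pres_eq.sym)
qed (auto simp: pres_class_def intro: pres_eq.trans pres_eq.sym)

lemma carrier_presented_group: "carrier (presented_group S R) = pres_class S R ` words S"
  by (simp add: presented_group_def)

lemma one_presented_group: "\<one>\<^bsub>presented_group S R\<^esub> = pres_class S R []"
  by (simp add: presented_group_def)

lemma mult_presented_group:
  "u \<in> words S \<Longrightarrow> v \<in> words S \<Longrightarrow>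
    pres_class S R u \<otimes>\<^bsub>presented_group S R\<^esub> pres_class S R v = pres_class S R (u @ v)"
  by (auto simp: presented_group_def pres_class_def intro: pres_eq.refl pres_eq.trans pres_eq_append)

definition word_inv :: "'a word \<Rightarrow> 'a word" where
  "word_inv w = rev (map (\<lambda>(x, b). (x, \<not> b)) w)"

lemma word_inv_words: "w \<in> words S \<Longrightarrow> word_inv w \<in> words S"
  by (auto simp: word_inv_def words_def)

lemma word_inv_word_inv [simp]: "word_inv (word_inv w) = w"
  by (induction w) (auto simp: word_inv_def rev_map)

lemma pres_eq_append_word_inv: "w \<in> words S \<Longrightarrow> pres_eq S R (w @ word_inv w) []"
proof (induction w)
  case Nil
  then show ?case by (simp add: word_inv_def pres_eq.refl)
next
  case (Cons a w)
  obtain x b where a: "a = (x, b)" by (cases a)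
  have w: "w \<in> words S" and x: "x \<in> S" using Cons.prems a by auto
  have "(a # w) @ word_inv (a # w) = [(x, b)] @ (w @ word_inv w) @ [(x, \<not> b)]"
    by (simp add: word_inv_def a)
  moreover have "pres_eq S R ([(x, b)] @ (w @ word_inv w) @ [(x, \<not> b)]) ([(x, b)] @ [] @ [(x, \<not> b)])"
    using Cons.IH[OF w] x by (intro pres_eq_append pres_eq.refl) auto
  moreover have "pres_eq S R ([(x, b)] @ [] @ [(x, \<not> b)]) []"
    using pres_eq.cancel[of "[]" S "[]" x R b] x by simp
  ultimately show ?case by (metis pres_eq.trans)
qed

lemma group_presented_group: "group (presented_group S R)"
proof (rule groupI)
  fix x assume "x \<in> carrier (presented_group S R)"
  then obtain w where w: "w \<in> words S" and x: "x = pres_class S R w"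
    by (auto simp: carrier_presented_group)
  have "pres_class S R (word_inv w) \<otimes>\<^bsub>presented_group S R\<^esub> x = pres_class S R []"
    using pres_eq_append_word_inv[OF word_inv_words[OF w]] w x word_inv_words[OF w]
    by (simp add: mult_presented_group pres_class_eq_iff)
  then show "\<exists>y\<in>carrier (presented_group S R). y \<otimes>\<^bsub>presented_group S R\<^esub> x = \<one>\<^bsub>presented_group S R\<^esub>"
    using word_inv_words[OF w] by (auto simp: carrier_presented_group one_presented_group)
qed (auto simp: carrier_presented_group one_presented_group mult_presented_group)

lemma inv_presented_group_letter:
  assumes "x \<in> S"
  shows "inv\<^bsub>presented_group S R\<^esub> (pres_class S R [(x, b)]) = pres_class S R [(x, \<not> b)]"
proof (rule group.inv_equality[OF group_presented_group])
  have "pres_eq S R [(x, \<not> b), (x, \<not> \<not> b)] []"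
    using pres_eq.cancel[of "[]" S "[]" x R "\<not> b"] assms by simp
  then show "pres_class S R [(x, \<not> b)] \<otimes>\<^bsub>presented_group S R\<^esub> pres_class S R [(x, b)]
      = \<one>\<^bsub>presented_group S R\<^esub>"
    using assms by (simp add: mult_presented_group one_presented_group pres_class_eq_iff)
qed (use assms in \<open>auto simp: carrier_presented_group\<close>)

definition pres_gen :: "'a set \<Rightarrow> ('a word \<times> 'a word) set \<Rightarrow> 'a \<Rightarrow> 'a word set" where
  "pres_gen S R x = pres_class S R [(x, False)]"

lemma pres_gen_in_carrier: "x \<in> S \<Longrightarrow> pres_gen S R x \<in> carrier (presented_group S R)"
  by (auto simp: pres_gen_def carrier_presented_group)

lemma generate_pres_gen: "generate (presented_group S R) (pres_gen S R ` S) = carrier (presented_group S R)"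
proof
  interpret P: group "presented_group S R" by (rule group_presented_group)
  show "generate (presented_group S R) (pres_gen S R ` S) \<subseteq> carrier (presented_group S R)"
    by (rule P.generate_subgroup_incl) (auto simp: pres_gen_in_carrier intro: P.subgroup_self)
  have "pres_class S R w \<in> generate (presented_group S R) (pres_gen S R ` S)" if "w \<in> words S" for w
    using that
  proof (induction w)
    case Nil
    then show ?case using generate.one by (metis one_presented_group)
  next
    case (Cons a w)
    obtain x b where a: "a = (x, b)" by (cases a)
    have x: "x \<in> S" and w: "w \<in> words S" using Cons.prems a by auto
    have letter: "pres_class S R [(x, b)] \<in> generate (presented_group S R) (pres_gen S R ` S)"
    proof (cases b)
      case True
      then show ?thesis
        using generate.inv[OF imageI[OF x], of "presented_group S R" "pres_gen S R"]
          inv_presented_group_letter[OF x, of R False] by (simp add: pres_gen_def)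
    next
      case False
      then show ?thesis
        using generate.incl[OF imageI[OF x], of "pres_gen S R" "presented_group S R"]
        by (simp add: pres_gen_def)
    qed
    then show ?case
      using generate.eng[OF letter Cons.IH[OF w]] mult_presented_group[of "[(x, b)]" S w R] x w a by simp
  qed
  then show "carrier (presented_group S R) \<subseteq> generate (presented_group S R) (pres_gen S R ` S)"
    by (auto simp: carrier_presented_group)
qed

subsection \<open>Exponent sums\<close>

definition exponent_sum :: "'a word \<Rightarrow> int" where
  "exponent_sum w = sum_list (map (\<lambda>(x, b). if b then -1 else 1) w)"

lemma exponent_sum_Nil [simp]: "exponent_sum [] = 0"
  by (simp add: exponent_sum_def)

lemma exponent_sum_Cons [simp]: "exponent_sum ((x, b) # w) = (if b then -1 else 1) + exponent_sum w"
  by (simp add: exponent_sum_def)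

lemma exponent_sum_append [simp]: "exponent_sum (u @ v) = exponent_sum u + exponent_sum v"
  by (simp add: exponent_sum_def)

lemma exponent_sum_pres_eq:
  "pres_eq S R u v \<Longrightarrow> (\<And>l r. (l, r) \<in> R \<Longrightarrow> exponent_sum l = exponent_sum r) \<Longrightarrow>
    exponent_sum u = exponent_sum v"
  by (induction rule: pres_eq.induct) auto

definition pres_exponent_sum :: "'a word set \<Rightarrow> int" where
  "pres_exponent_sum A = the_elem (exponent_sum ` A)"

lemma pres_exponent_sum_class:
  assumes "w \<in> words S" and "\<And>l r. (l, r) \<in> R \<Longrightarrow> exponent_sum l = exponent_sum r"
  shows "pres_exponent_sum (pres_class S R w) = exponent_sum w"
proof -
  have "exponent_sum ` pres_class S R w = {exponent_sum w}"
    using assms exponent_sum_pres_eq[of S R w] by (auto simp: pres_class_def intro: pres_eq.refl)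
  then show ?thesis by (simp add: pres_exponent_sum_def)
qed

lemma pres_exponent_sum_hom:
  "(\<And>l r. (l, r) \<in> R \<Longrightarrow> exponent_sum l = exponent_sum r) \<Longrightarrow>
    pres_exponent_sum \<in> hom (presented_group S R) integer_group"
  by (rule homI) (auto simp: carrier_presented_group mult_presented_group pres_exponent_sum_class)

section \<open>The C-group\<close>

lemma C_group_rels_exponent_sum:
  "(l, r) \<in> C_group_rels G Ocl \<Longrightarrow> exponent_sum l = exponent_sum r"
  by (auto simp: C_group_rels_def)

lemma C_group_gen_conj:
  assumes g: "g \<in> Ocl" and h: "h \<in> Ocl" and gh: "inv\<^bsub>G\<^esub> h \<otimes>\<^bsub>G\<^esub> g \<otimes>\<^bsub>G\<^esub> h \<in> Ocl"
  defines "C \<equiv> C_group G Ocl" and "Y \<equiv> pres_gen Ocl (C_group_rels G Ocl)"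
  shows "Y (inv\<^bsub>G\<^esub> h \<otimes>\<^bsub>G\<^esub> g \<otimes>\<^bsub>G\<^esub> h)
    = inv\<^bsub>C\<^esub> Y h \<otimes>\<^bsub>C\<^esub> Y g \<otimes>\<^bsub>C\<^esub> Y h"
proof -
  let ?R = "C_group_rels G Ocl"
  have "inv\<^bsub>C\<^esub> Y h \<otimes>\<^bsub>C\<^esub> Y g \<otimes>\<^bsub>C\<^esub> Y h
      = pres_class Ocl ?R [(h, True), (g, False), (h, False)]"
    using g h inv_presented_group_letter[OF h, of ?R False]
    by (simp add: C_def Y_def pres_gen_def C_group_def mult_presented_group)
  also have "\<dots> = pres_class Ocl ?R [(inv\<^bsub>G\<^esub> h \<otimes>\<^bsub>G\<^esub> g \<otimes>\<^bsub>G\<^esub> h, False)]"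
    using pres_eq.rel[of _ _ ?R Ocl "[]" "[]"] g h gh
    by (auto simp: pres_class_eq_iff C_group_rels_def)
  finally show ?thesis by (simp add: Y_def pres_gen_def)
qed

lemma (in group) C_group_gen_conj_by_generated:
  assumes Ocl: "Ocl \<subseteq> carrier G"
    and conj_closed: "\<And>k z. k \<in> carrier G \<Longrightarrow> z \<in> Ocl \<Longrightarrow> inv k \<otimes> z \<otimes> k \<in> Ocl"
    and h: "h \<in> generate G Ocl"
  defines "C \<equiv> C_group G Ocl" and "Y \<equiv> pres_gen Ocl (C_group_rels G Ocl)"
  shows "\<exists>c\<in>carrier C. \<forall>z\<in>Ocl.
    Y (inv h \<otimes> z \<otimes> h) = inv\<^bsub>C\<^esub> c \<otimes>\<^bsub>C\<^esub> Y z \<otimes>\<^bsub>C\<^esub> c"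
  using h
proof (induction rule: generate.induct)
  interpret C: group C
    by (simp add: C_def C_group_def group_presented_group)
  have Y: "Y z \<in> carrier C" if "z \<in> Ocl" for z
    using that by (simp add: C_def Y_def C_group_def pres_gen_in_carrier)
  {
    case one
    show ?case using Ocl Y by (intro bexI[of _ "\<one>\<^bsub>C\<^esub>"]) auto
  next
    case (incl h)
    have "\<forall>z\<in>Ocl. Y (inv h \<otimes> z \<otimes> h)
        = inv\<^bsub>C\<^esub> Y h \<otimes>\<^bsub>C\<^esub> Y z \<otimes>\<^bsub>C\<^esub> Y h"
      using incl conj_closed Ocl C_group_gen_conj[of _ Ocl h G] by (auto simp: C_def Y_def)
    then show ?case using Y[OF incl] by blast
  next
    case (inv h)
    have hc: "h \<in> carrier G" using inv Ocl by blast
    have "Y (h \<otimes> z \<otimes> inv h) = Y h \<otimes>\<^bsub>C\<^esub> Y z \<otimes>\<^bsub>C\<^esub> inv\<^bsub>C\<^esub> Y h"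
      if z: "z \<in> Ocl" for z
    proof -
      have z': "h \<otimes> z \<otimes> inv h \<in> Ocl"
        using conj_closed[of "inv h" z] hc z by simp
      have "Y z = inv\<^bsub>C\<^esub> Y h \<otimes>\<^bsub>C\<^esub> Y (h \<otimes> z \<otimes> inv h) \<otimes>\<^bsub>C\<^esub> Y h"
        using C_group_gen_conj[OF z' inv, of G] hc z Ocl by (auto simp: C_def Y_def m_assoc)
      then show ?thesis
        using Y[OF z'] Y[OF inv] Y[OF z] by (simp add: C.m_assoc)
    qed
    then show ?case
      using hc Y[OF inv] by (intro bexI[of _ "inv\<^bsub>C\<^esub> Y h"]) auto
  next
    case (eng h1 h2)
    obtain c1 where c1: "c1 \<in> carrier C"
      "\<forall>z\<in>Ocl. Y (inv h1 \<otimes> z \<otimes> h1) = inv\<^bsub>C\<^esub> c1 \<otimes>\<^bsub>C\<^esub> Y z \<otimes>\<^bsub>C\<^esub> c1"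
      using eng.IH(1) by blast
    obtain c2 where c2: "c2 \<in> carrier C"
      "\<forall>z\<in>Ocl. Y (inv h2 \<otimes> z \<otimes> h2) = inv\<^bsub>C\<^esub> c2 \<otimes>\<^bsub>C\<^esub> Y z \<otimes>\<^bsub>C\<^esub> c2"
      using eng.IH(2) by blast
    have h1: "h1 \<in> carrier G" and h2: "h2 \<in> carrier G"
      using eng.hyps generate_in_carrier[OF Ocl] by auto
    have "Y (inv (h1 \<otimes> h2) \<otimes> z \<otimes> (h1 \<otimes> h2))
        = inv\<^bsub>C\<^esub> (c1 \<otimes>\<^bsub>C\<^esub> c2) \<otimes>\<^bsub>C\<^esub> Y z \<otimes>\<^bsub>C\<^esub> (c1 \<otimes>\<^bsub>C\<^esub> c2)"
      if z: "z \<in> Ocl" for z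
    proof -
      have "inv (h1 \<otimes> h2) \<otimes> z \<otimes> (h1 \<otimes> h2) = inv h2 \<otimes> (inv h1 \<otimes> z \<otimes> h1) \<otimes> h2"
        using h1 h2 z Ocl by (auto simp: m_assoc inv_mult_group)
      then have "Y (inv (h1 \<otimes> h2) \<otimes> z \<otimes> (h1 \<otimes> h2))
          = inv\<^bsub>C\<^esub> c2 \<otimes>\<^bsub>C\<^esub> Y (inv h1 \<otimes> z \<otimes> h1) \<otimes>\<^bsub>C\<^esub> c2"
        using c2 conj_closed[OF h1 z] by simp
      also have "\<dots> = inv\<^bsub>C\<^esub> c2 \<otimes>\<^bsub>C\<^esub>
          (inv\<^bsub>C\<^esub> c1 \<otimes>\<^bsub>C\<^esub> Y z \<otimes>\<^bsub>C\<^esub> c1) \<otimes>\<^bsub>C\<^esub> c2"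
        using c1 z by simp
      finally show ?thesis
        using c1 c2 Y[OF z] by (simp add: C.m_assoc C.inv_mult_group)
    qed
    then show ?case using c1 c2 by blast
  }
qed

lemma (in group) self_in_conj_class: "g \<in> carrier G \<Longrightarrow> g \<in> conj_class G g"
  unfolding conj_class_def by (auto intro!: exI[of _ \<one>])

lemma (in group) conj_class_subset_carrier: "g \<in> carrier G \<Longrightarrow> conj_class G g \<subseteq> carrier G"
  by (auto simp: conj_class_def)

lemma (in group) conj_class_conj_closed:
  assumes g: "g \<in> carrier G" and z: "z \<in> conj_class G g" and k: "k \<in> carrier G"
  shows "inv k \<otimes> z \<otimes> k \<in> conj_class G g"
proof -
  obtain h where h: "h \<in> carrier G" "z = inv h \<otimes> g \<otimes> h"
    using z by (auto simp: conj_class_def)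
  then have "inv k \<otimes> z \<otimes> k = inv (h \<otimes> k) \<otimes> g \<otimes> (h \<otimes> k)"
    using g k by (simp add: m_assoc inv_mult_group)
  then show ?thesis
    using h k by (auto simp: conj_class_def)
qed

lemma C_group_exponent_sum_hom: "pres_exponent_sum \<in> hom (C_group G Ocl) integer_group"
  unfolding C_group_def by (rule pres_exponent_sum_hom) (rule C_group_rels_exponent_sum)

lemma C_group_exponent_sum_gen:
  "z \<in> Ocl \<Longrightarrow> pres_exponent_sum (pres_gen Ocl (C_group_rels G Ocl) z) = 1"
  using pres_exponent_sum_class[of "[(z, False)]" Ocl "C_group_rels G Ocl", OF _ C_group_rels_exponent_sum]
  by (simp add: pres_gen_def)

lemma (in group) C_group_gen_mult_inv_in_derived:
  assumes g: "g \<in> carrier G" and Ocl: "Ocl = conj_class G g"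
    and gen: "generate G Ocl = carrier G" and z: "z \<in> Ocl"
  defines "C \<equiv> C_group G Ocl" and "Y \<equiv> pres_gen Ocl (C_group_rels G Ocl)"
  shows "Y z \<otimes>\<^bsub>C\<^esub> inv\<^bsub>C\<^esub> Y g \<in> derived C (carrier C)"
proof -
  interpret C: group C by (simp add: C_def C_group_def group_presented_group)
  have g_Ocl: "g \<in> Ocl" using g Ocl self_in_conj_class by simp
  have Yg: "Y g \<in> carrier C"
    using g_Ocl by (simp add: C_def Y_def C_group_def pres_gen_in_carrier)
  obtain h where h: "h \<in> carrier G" "z = inv h \<otimes> g \<otimes> h"
    using z Ocl by (auto simp: conj_class_def)
  obtain c where c: "c \<in> carrier C" "Y z = inv\<^bsub>C\<^esub> c \<otimes>\<^bsub>C\<^esub> Y g \<otimes>\<^bsub>C\<^esub> c"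
    using C_group_gen_conj_by_generated[of Ocl h] conj_class_subset_carrier conj_class_conj_closed
      g Ocl g_Ocl h gen by (auto simp: C_def Y_def)
  then have "Y z \<otimes>\<^bsub>C\<^esub> inv\<^bsub>C\<^esub> Y g
      = inv\<^bsub>C\<^esub> c \<otimes>\<^bsub>C\<^esub> Y g \<otimes>\<^bsub>C\<^esub> inv\<^bsub>C\<^esub> (inv\<^bsub>C\<^esub> c) \<otimes>\<^bsub>C\<^esub> inv\<^bsub>C\<^esub> Y g"
    by simp
  then have "Y z \<otimes>\<^bsub>C\<^esub> inv\<^bsub>C\<^esub> Y g \<in> derived_set C (carrier C)"
    using c Yg by blast
  then show ?thesis unfolding derived_def by (rule generate.incl)
qed

theorem proposition2p15:
  fixes G :: "('a, 'b) monoid_scheme" and Ocl :: "'a set"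
  assumes "equipped_group G Ocl"
    and "generate G Ocl = carrier G"
    and "\<exists>g\<in>carrier G. Ocl = conj_class G g"
  shows "\<exists>\<phi>. \<phi> \<in> hom integer_group
              (AutoGroup ((C_group G Ocl)\<lparr>carrier := derived (C_group G Ocl) (carrier (C_group G Ocl))\<rparr>))
           \<and> C_group G Ocl \<cong>
             semidirect_product
               ((C_group G Ocl)\<lparr>carrier := derived (C_group G Ocl) (carrier (C_group G Ocl))\<rparr>)
               integer_group \<phi>"
proof -
  \<comment> \<open>of the equipped-group axioms only the group structure is needed\<close>
  interpret G: group G using assms(1) by (simp add: equipped_group_def)
  obtain g where g: "g \<in> carrier G" and Ocl: "Ocl = conj_class G g" using assms(3) by blast
  let ?C = "C_group G Ocl" and ?Y = "pres_gen Ocl (C_group_rels G Ocl)"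
  let ?D = "derived ?C (carrier ?C)" and ?E = "pres_exponent_sum :: 'a word set \<Rightarrow> int"
  interpret C: group ?C by (simp add: C_group_def group_presented_group)
  have g_Ocl: "g \<in> Ocl" using g Ocl G.self_in_conj_class by simp
  have t: "?Y g \<in> carrier ?C" using g_Ocl by (simp add: C_group_def pres_gen_in_carrier)
  have "kernel ?C integer_group ?E \<subseteq> ?D"
  proof (rule C.kernel_integer_subset_normal[OF C.derived_self_is_normal C_group_exponent_sum_hom t])
    show "generate ?C (?Y ` Ocl) = carrier ?C"
      using generate_pres_gen by (simp add: C_group_def)
    show "?E y = 1" if "y \<in> ?Y ` Ocl" for y
      using that by (auto simp: C_group_exponent_sum_gen)
    show "y \<otimes>\<^bsub>?C\<^esub> inv\<^bsub>?C\<^esub> ?Y g \<in> ?D" if "y \<in> ?Y ` Ocl" for y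
      using that G.C_group_gen_mult_inv_in_derived[OF g Ocl assms(2)] by auto
  qed
  then have "?D = kernel ?C integer_group ?E"
    using C.derived_subset_kernel[OF abelian_integer_group C_group_exponent_sum_hom] by blast
  then show ?thesis
    using C.iso_semidirect_kernel_integer[OF C_group_exponent_sum_hom t C_group_exponent_sum_gen[OF g_Ocl]]
      C.conj_action_hom_AutoGroup[OF C.derived_self_is_normal t] by auto
qed

end
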